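(* Let $r>0$ and $\theta>0$ be constants and $q<0$. Let $\tilde U\in C((0,\infty))$ satisfy $$\lim_{y\to\infty}\tilde U(y)=0,\qquad \lim_{y\to0}\frac{\tilde U(y)}{y^q}=1.$$ For $\tau>0$, $y>0$ let $$v(\tau,y)=E\Big[\tilde U\big(y\,e^{-(r+\theta^2/2)\tau-\theta W_\tau}\big)\Big],$$ where $W$ is a standard one-dimensional Brownian motion; $v$ is the solution of $v_\tau-\frac12\theta^2y^2v_{yy}+ryv_y=0$ on $(0,\infty)\times(0,\infty)$ with $v(0,y)=\tilde U(y)$. Then $$\lim_{y\to\infty}v(\tau,y)=0,\quad \lim_{y\to\infty}y\,v_y(\tau,y)=0,\quad \lim_{y\to\infty}y^2v_{yy}(\tau,y)=0,$$ and $$\lim_{y\to0}\frac{v(\tau,y)}{e^{\lambda\tau}y^q}=1,\quad \lim_{y\to0}\frac{v_y(\tau,y)}{e^{\lambda\tau}y^{q-1}}=q,\quad \lim_{y\to0}\frac{v_{yy}(\tau,y)}{e^{\lambda\tau}y^{q-2}}=q(q-1),$$ where $\lambda=\frac12\theta^2q(q-1)-rq$. The convergence is uniform for $\tau\in[\tau_0,\tau_1]$, for any $0<\tau_0<\tau_1$.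
   Context: In the paper, $v$ is the dual value function (as a function of time to maturity $\tau$) for a market with one riskless asset with rate $r$ and one stock $dS=\mu S\,dt+\sigma S\,dW$, $\theta=(\mu-r)/\sigma$; it equals the probabilistic representation given in the claim. *)

theory Defs
  imports "HOL-Probability.Probability"
begin

text \<open>Law of the standard Brownian motion at time tau: N(0, tau).
  normal_density takes the standard deviation as its second argument.\<close>
definition bm_law :: "real \<Rightarrow> real measure" where
  "bm_law \<tau> = density lborel (normal_density 0 (sqrt \<tau>))"

definition dual_v :: "real \<Rightarrow> real \<Rightarrow> (real \<Rightarrow> real) \<Rightarrow> real \<Rightarrow> real \<Rightarrow> real" where
  "dual_v r \<theta> U \<tau> y =
     (\<integral>w. U (y * exp (- (r + \<theta>\<^sup>2 / 2) * \<tau> - \<theta> * w)) \<partial>bm_law \<tau>)"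

definition dual_lambda :: "real \<Rightarrow> real \<Rightarrow> real \<Rightarrow> real" where
  "dual_lambda r \<theta> q = \<theta>\<^sup>2 * q * (q - 1) / 2 - r * q"

end

theory Submission
  imports Defs
begin

text \<open>
  Write \<open>f = U \<circ> exp\<close>, \<open>s = \<theta> sqrt \<tau>\<close> and \<open>x = ln y - (r + \<theta>\<^sup>2/2) \<tau>\<close>.  Then
  \<open>v(\<tau>, y) = E f(x - s Z)\<close> for a standard normal \<open>Z\<close>: a Gaussian transform of \<open>f\<close>.
  Shifting the integration variable moves the dependence on \<open>x\<close> onto the Gaussian density,
  so \<open>y \<partial>\<^sub>y\<close> can be taken under the integral although \<open>f\<close> is merely continuous; it turns a
  kernel \<open>Q(t)\<close> into \<open>(Q'(t) - t Q(t)) / s\<close>.  Hence \<open>y v\<^sub>y\<close> and \<open>y\<^sup>2 v\<^sub>y\<^sub>y\<close> are Gaussian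
  transforms of \<open>f\<close> with the kernels \<open>-t/s\<close> and \<open>(t\<^sup>2 - 1)/s\<^sup>2 + t/s\<close>.

  The hypotheses on \<open>U\<close> give \<open>|f z| \<le> C (1 + exp (q z))\<close>, which dominates all integrands.
  As \<open>y \<rightarrow> \<infinity>\<close> the argument of \<open>f\<close> tends to \<open>+\<infinity>\<close> and the transforms vanish.  As
  \<open>y \<rightarrow> 0\<close> we have \<open>f(z) exp (-q z) \<rightarrow> 1\<close>, and dividing by
  \<open>exp (\<lambda> \<tau>) y\<^sup>q = exp (q x + q\<^sup>2 s\<^sup>2/2)\<close> tilts the law of \<open>Z\<close> into \<open>N(-q s, 1)\<close>, whose
  moments give the limits \<open>1\<close>, \<open>q\<close> and \<open>q (q - 1)\<close>.  Uniformity in \<open>\<tau>\<close> on compact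
  intervals follows by passing to convergent subsequences of \<open>\<tau>\<close>.
\<close>

section \<open>Limits of integrals and uniform limits along sequences\<close>

lemma integral_dominated_convergence_eventually:
  fixes s :: "nat \<Rightarrow> 'a \<Rightarrow> real" and f w :: "'a \<Rightarrow> real"
  assumes "f \<in> borel_measurable M" "\<And>i. s i \<in> borel_measurable M" "integrable M w"
    and lim: "\<And>x. (\<lambda>i. s i x) \<longlonglongrightarrow> f x"
    and bound: "eventually (\<lambda>i. \<forall>x. \<bar>s i x\<bar> \<le> w x) sequentially"
  shows "(\<lambda>i. integral\<^sup>L M (s i)) \<longlonglongrightarrow> integral\<^sup>L M f"
proof -
  from bound obtain N where N: "\<And>i. i \<ge> N \<Longrightarrow> \<forall>x. \<bar>s i x\<bar> \<le> w x"
    by (auto simp: eventually_sequentially)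
  show ?thesis
  proof (rule LIMSEQ_offset[where k = N], rule integral_dominated_convergence[where w = w])
    show "AE x in M. (\<lambda>i. s (i + N) x) \<longlonglongrightarrow> f x"
      using lim by (intro AE_I2) (rule LIMSEQ_ignore_initial_segment)
    show "AE x in M. norm (s (i + N) x) \<le> w x" for i
      using N[of "i + N"] by auto
  qed (use assms in auto)
qed

lemma has_real_derivative_integral:
  fixes F F' :: "real \<Rightarrow> 'a \<Rightarrow> real" and w :: "'a \<Rightarrow> real"
  assumes integrable: "\<And>x. integrable M (F x)"
    and deriv: "\<And>x t. ((\<lambda>x. F x t) has_real_derivative F' x t) (at x)"
    and "F' x0 \<in> borel_measurable M" and "integrable M w"
    and bound: "\<And>x t. \<bar>x - x0\<bar> \<le> 1 \<Longrightarrow> \<bar>F' x t\<bar> \<le> w t"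
  shows "((\<lambda>x. \<integral>t. F x t \<partial>M) has_real_derivative (\<integral>t. F' x0 t \<partial>M)) (at x0)"
  unfolding has_field_derivative_iff tendsto_at_iff_sequentially
proof (intro allI impI)
  fix X :: "nat \<Rightarrow> real" assume X: "\<forall>i. X i \<in> UNIV - {x0}" "X \<longlonglongrightarrow> x0"
  have quotient_eq: "((\<integral>t. F (X i) t \<partial>M) - (\<integral>t. F x0 t \<partial>M)) / (X i - x0)
      = (\<integral>t. (F (X i) t - F x0 t) / (X i - x0) \<partial>M)" for i
    using integrable by simp
  have "(\<lambda>i. \<integral>t. (F (X i) t - F x0 t) / (X i - x0) \<partial>M) \<longlonglongrightarrow> (\<integral>t. F' x0 t \<partial>M)"
  proof (rule integral_dominated_convergence_eventually[where w = w])
    show "(\<lambda>t. (F (X i) t - F x0 t) / (X i - x0)) \<in> borel_measurable M" for i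
      using integrable[of "X i"] integrable[of x0] by measurable
    show "(\<lambda>i. (F (X i) t - F x0 t) / (X i - x0)) \<longlonglongrightarrow> F' x0 t" for t
      using deriv[of t x0] X unfolding has_field_derivative_iff tendsto_at_iff_sequentially
      by (auto simp: o_def)
    have "eventually (\<lambda>i. dist (X i) x0 < 1) sequentially"
      using X(2) by (rule tendstoD) simp
    then show "eventually (\<lambda>i. \<forall>t. \<bar>(F (X i) t - F x0 t) / (X i - x0)\<bar> \<le> w t) sequentially"
    proof eventually_elim
      case (elim i)
      show ?case
      proof
        fix t
        have "norm (F (X i) t - F x0 t) \<le> w t * norm (X i - x0)"
        proof (rule field_differentiable_bound[where S = "cball x0 1"])
          show "((\<lambda>x. F x t) has_field_derivative F' z t) (at z within cball x0 1)" for z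
            using deriv by (rule has_field_derivative_at_within)
          show "norm (F' z t) \<le> w t" if "z \<in> cball x0 1" for z
            using bound[of z t] that by (simp add: dist_real_def abs_minus_commute)
        qed (use elim in \<open>auto simp: dist_real_def abs_minus_commute\<close>)
        moreover have "X i \<noteq> x0" using X(1) by auto
        ultimately show "\<bar>(F (X i) t - F x0 t) / (X i - x0)\<bar> \<le> w t"
          by (simp add: abs_divide divide_le_eq)
      qed
    qed
  qed (use assms in auto)
  then show "((\<lambda>x. ((\<integral>t. F x t \<partial>M) - (\<integral>t. F x0 t \<partial>M)) / (x - x0)) \<circ> X)
      \<longlonglongrightarrow> (\<integral>t. F' x0 t \<partial>M)"
    by (simp add: o_def quotient_eq)
qed

lemma eventually_at_top_sequentiallyI:
  fixes P :: "real \<Rightarrow> bool"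
  assumes "\<And>Y. filterlim Y at_top sequentially \<Longrightarrow> eventually (\<lambda>n. P (Y n)) sequentially"
  shows "eventually P at_top"
proof -
  define g :: "real \<Rightarrow> real" where "g x = (if P x then 0 else 1)" for x
  have "(g \<longlongrightarrow> 0) at_top"
  proof (rule tendsto_at_topI_sequentially)
    fix Y :: "nat \<Rightarrow> real" assume "filterlim Y at_top sequentially"
    with assms have "eventually (\<lambda>n. g (Y n) = 0) sequentially"
      by (auto simp: g_def elim: eventually_mono)
    then show "(\<lambda>n. g (Y n)) \<longlonglongrightarrow> 0" by (rule tendsto_eventually)
  qed
  then have "eventually (\<lambda>x. dist (g x) 0 < 1) at_top"
    by (rule tendstoD) simp
  then show ?thesis by eventually_elim (auto simp: g_def split: if_splits)
qed

lemma eventually_at_right_sequentiallyI: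
  fixes P :: "real \<Rightarrow> bool"
  assumes "\<And>Y. filterlim Y (at_right a) sequentially \<Longrightarrow> eventually (\<lambda>n. P (Y n)) sequentially"
  shows "eventually P (at_right a)"
proof (rule sequentially_imp_eventually_at_right[where b = "a + 1"])
  fix Y :: "nat \<Rightarrow> real" assume "\<And>n. a < Y n" "Y \<longlonglongrightarrow> a"
  then show "eventually (\<lambda>n. P (Y n)) sequentially"
    by (intro assms tendsto_imp_filterlim_at_right) auto
qed simp

lemma uniform_limit_sequentiallyI:
  fixes F :: "'a \<Rightarrow> 'b::metric_space \<Rightarrow> 'c::metric_space"
  assumes "compact K" and L: "continuous_on K L"
    and sequential: "\<And>P. (\<And>Y. filterlim Y G sequentially \<Longrightarrow> eventually (\<lambda>n. P (Y n)) sequentially)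
      \<Longrightarrow> eventually P G"
    and lim: "\<And>Y T \<tau>. filterlim Y G sequentially \<Longrightarrow> (\<And>n. T n \<in> K) \<Longrightarrow> T \<longlonglongrightarrow> \<tau> \<Longrightarrow> \<tau> \<in> K
      \<Longrightarrow> (\<lambda>n. F (Y n) (T n)) \<longlonglongrightarrow> L \<tau>"
  shows "uniform_limit K F L G"
proof (rule uniform_limitI, rule sequential)
  fix e :: real and Y assume e: "0 < e" and Y: "filterlim Y G sequentially"
  show "eventually (\<lambda>n. \<forall>\<tau>\<in>K. dist (F (Y n) \<tau>) (L \<tau>) < e) sequentially"
  proof (rule ccontr)
    assume "\<not> ?thesis"
    from not_eventually_sequentiallyD[OF this] obtain r :: "nat \<Rightarrow> nat" where r: "strict_mono r"
      and "\<forall>n. \<exists>\<tau>\<in>K. \<not> dist (F (Y (r n)) \<tau>) (L \<tau>) < e"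
      by blast
    then obtain T where T: "\<And>n. T n \<in> K" and far: "\<And>n. \<not> dist (F (Y (r n)) (T n)) (L (T n)) < e"
      by metis
    obtain \<tau> r' where \<tau>: "\<tau> \<in> K" and r': "strict_mono r'" and T_lim: "(T \<circ> r') \<longlonglongrightarrow> \<tau>"
      using compact_imp_seq_compact[OF \<open>compact K\<close>] T by (metis seq_compactE)
    define R where "R = r \<circ> r'"
    have "filterlim (\<lambda>n. Y (R n)) G sequentially"
      unfolding R_def by (rule filterlim_compose[OF Y filterlim_subseq[OF strict_mono_o[OF r r']]])
    then have "(\<lambda>n. F (Y (R n)) (T (r' n))) \<longlonglongrightarrow> L \<tau>"
      using T T_lim \<tau> by (intro lim) (auto simp: o_def)
    moreover have "(\<lambda>n. L (T (r' n))) \<longlonglongrightarrow> L \<tau>"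
      using continuous_on_tendsto_compose[OF L T_lim \<tau>] T by (simp add: o_def)
    ultimately have "(\<lambda>n. dist (F (Y (R n)) (T (r' n))) (L (T (r' n)))) \<longlonglongrightarrow> 0"
      using tendsto_dist by fastforce
    then have "eventually (\<lambda>n. dist (F (Y (R n)) (T (r' n))) (L (T (r' n))) < e) sequentially"
      using e by (rule order_tendstoD)
    then show False using far by (auto simp: R_def eventually_sequentially)
  qed
qed

lemma uniform_limit_transform_eventually:
  assumes "uniform_limit X g h F" and "eventually (\<lambda>y. \<forall>x\<in>X. g y x = f y x) F"
  shows "uniform_limit X f h F"
  using uniform_limit_cong[OF assms(2), of h h] assms(1) by simp

section \<open>Gaussian estimates\<close>

lemma abs_le_exp_abs: "\<bar>t::real\<bar> \<le> exp \<bar>t\<bar>"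
  using exp_ge_add_one_self[of "\<bar>t\<bar>"] by linarith

lemma power2_le_exp_abs: "(t::real)\<^sup>2 \<le> 4 * exp \<bar>t\<bar>"
proof -
  have half: "\<bar>t\<bar> / 2 \<le> exp (\<bar>t\<bar> / 2)"
    using exp_ge_add_one_self[of "\<bar>t\<bar> / 2"] by linarith
  have "t\<^sup>2 = 4 * (\<bar>t\<bar> / 2)\<^sup>2" by (simp add: power2_eq_square)
  also have "\<dots> \<le> 4 * (exp (\<bar>t\<bar> / 2))\<^sup>2"
    using half by (intro mult_left_mono power_mono) auto
  also have "(exp (\<bar>t\<bar> / 2))\<^sup>2 = exp \<bar>t\<bar>" by (simp add: power2_eq_square mult_exp_exp)
  finally show ?thesis .
qed

lemma abs_power2_minus_one_le_exp_abs: "\<bar>(t::real)\<^sup>2 - 1\<bar> \<le> 4 * exp \<bar>t\<bar>"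
  using power2_le_exp_abs[of t] one_le_exp_iff[of "\<bar>t\<bar>"] zero_le_power2[of t]
  unfolding abs_le_iff by linarith

lemma normal_density_exp_tilt:
  "exp (\<mu> * t - \<mu>\<^sup>2 / 2) * std_normal_density t = normal_density \<mu> 1 t"
  unfolding normal_density_def by (simp add: mult_exp_exp power2_eq_square field_simps)

lemma integrable_std_normal_density_exp_abs:
  "integrable lborel (\<lambda>t. std_normal_density t * exp (c * \<bar>t\<bar>))"
proof (rule Bochner_Integration.integrable_bound)
  have tilt: "std_normal_density t * exp (a * t) = exp (a\<^sup>2 / 2) * normal_density a 1 t" for a t
    unfolding normal_density_def by (simp add: mult_exp_exp power2_eq_square field_simps)
  show "integrable lborel (\<lambda>t. std_normal_density t * exp (c * t) + std_normal_density t * exp (- c * t))"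
    unfolding tilt by (intro Bochner_Integration.integrable_add integrable_mult_right) auto
  show "AE t in lborel. norm (std_normal_density t * exp (c * \<bar>t\<bar>))
      \<le> norm (std_normal_density t * exp (c * t) + std_normal_density t * exp (- c * t))"
  proof (intro AE_I2)
    fix t :: real
    have "exp (c * \<bar>t\<bar>) \<le> exp (c * t) + exp (- c * t)"
      by (cases "t \<ge> 0") (auto simp: add_increasing add_increasing2)
    then show "norm (std_normal_density t * exp (c * \<bar>t\<bar>))
        \<le> norm (std_normal_density t * exp (c * t) + std_normal_density t * exp (- c * t))"
      by (simp add: distrib_left[symmetric] mult_left_mono)
  qed
qed measurable

lemma std_normal_density_shift_le:
  assumes "\<bar>d\<bar> \<le> D"
  shows "std_normal_density (u + d) \<le> std_normal_density u * exp (D * \<bar>u\<bar>)"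
proof -
  have "- u * d \<le> \<bar>u\<bar> * \<bar>d\<bar>" by (metis abs_ge_minus_self abs_mult mult_minus_left)
  also have "\<dots> \<le> \<bar>u\<bar> * D" using assms by (intro mult_left_mono) auto
  finally have "- u * d \<le> D * \<bar>u\<bar>" by (simp add: mult.commute)
  moreover have "- (u + d)\<^sup>2 / 2 = - u\<^sup>2 / 2 + (- u * d) - d\<^sup>2 / 2"
    by (simp add: power2_eq_square field_simps)
  ultimately have "- (u + d)\<^sup>2 / 2 \<le> - u\<^sup>2 / 2 + D * \<bar>u\<bar>"
    using zero_le_power2[of d] by linarith
  then have "exp (- (u + d)\<^sup>2 / 2) \<le> exp (- u\<^sup>2 / 2) * exp (D * \<bar>u\<bar>)"
    by (simp add: mult_exp_exp)
  then show ?thesis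
    unfolding std_normal_density_def by (simp add: mult.assoc divide_right_mono)
qed

lemma has_real_derivative_std_normal_density:
  "(std_normal_density has_real_derivative (- u * std_normal_density u)) (at u)"
  unfolding normal_density_def
  by (auto intro!: derivative_eq_intros simp: field_simps power2_eq_square)

lemma has_bochner_integral_normal_density_square:
  "has_bochner_integral lborel (\<lambda>t. normal_density \<mu> 1 t * t\<^sup>2) (1 + \<mu>\<^sup>2)"
proof -
  have centered: "has_bochner_integral lborel (\<lambda>t. normal_density \<mu> 1 t * (t - \<mu>)\<^sup>2) 1"
    using normal_moment_even[of 1 \<mu> 1] by (simp add: numeral_2_eq_2)
  have mean: "has_bochner_integral lborel (\<lambda>t. normal_density \<mu> 1 t * t) \<mu>"
    by (rule normal_moment_nz_1) simp
  have total: "has_bochner_integral lborel (\<lambda>t. normal_density \<mu> 1 t) 1"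
    using has_bochner_integral_integrable[OF integrable_normal_density[of 1 \<mu>]] by simp
  have "has_bochner_integral lborel
      (\<lambda>t. normal_density \<mu> 1 t * (t - \<mu>)\<^sup>2 + 2 * \<mu> * (normal_density \<mu> 1 t * t) - \<mu>\<^sup>2 * normal_density \<mu> 1 t)
      (1 + 2 * \<mu> * \<mu> - \<mu>\<^sup>2 * 1)"
    by (intro has_bochner_integral_diff has_bochner_integral_add has_bochner_integral_mult_right
        centered mean total)
  then show ?thesis
    by (rule has_bochner_integral_cong[THEN iffD1, rotated -1])
      (simp_all add: power2_eq_square ring_distribs)
qed

lemma abs_mult_std_normal_density_le:
  assumes "\<bar>a\<bar> * \<bar>b\<bar> \<le> c"
  shows "\<bar>a * b * std_normal_density t\<bar> \<le> c * std_normal_density t"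
  using mult_right_mono[OF assms normal_density_nonneg[of 0 1 t]] by (simp add: abs_mult)

section \<open>Gaussian transforms of functions of exponential growth\<close>

definition gauss_transform :: "(real \<Rightarrow> real) \<Rightarrow> real \<Rightarrow> (real \<Rightarrow> real) \<Rightarrow> real \<Rightarrow> real" where
  "gauss_transform f s Q x = (\<integral>t. f (x - s * t) * Q t * std_normal_density t \<partial>lborel)"

lemma gauss_transform_divide: "gauss_transform f s Q x / c = gauss_transform f s (\<lambda>t. Q t / c) x"
  unfolding gauss_transform_def integral_divide_zero[symmetric] by simp

lemma gauss_transform_shift:
  assumes "s > 0"
  shows "gauss_transform f s Q x
    = (\<integral>t. f (- (s * t)) * (Q (t + x / s) * std_normal_density (t + x / s)) \<partial>lborel)"
proof -
  define g where "g t = f (x - s * t) * Q t * std_normal_density t" for t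
  have "gauss_transform f s Q x = (\<integral>t. g (x / s + 1 * t) \<partial>lborel)"
    using lborel_integral_real_affine[of 1 g "x / s"] by (simp add: gauss_transform_def g_def[abs_def])
  also have "\<dots> = (\<integral>t. f (- (s * t)) * (Q (t + x / s) * std_normal_density (t + x / s)) \<partial>lborel)"
  proof (rule Bochner_Integration.integral_cong)
    fix t
    have "x - s * (x / s + t) = - (s * t)" using assms by (simp add: field_simps)
    then show "g (x / s + 1 * t) = f (- (s * t)) * (Q (t + x / s) * std_normal_density (t + x / s))"
      by (simp add: g_def add.commute mult.assoc)
  qed simp
  finally show ?thesis .
qed

lemma exp_growth_shift_le:
  fixes f :: "real \<Rightarrow> real"
  assumes "C \<ge> 0" and growth: "\<And>z. \<bar>f z\<bar> \<le> C * (1 + exp (q * z))" and "s \<ge> 0"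
  shows "\<bar>f (x - s * t)\<bar> \<le> C * (1 + exp (q * x)) * exp (s * \<bar>q\<bar> * \<bar>t\<bar>)"
proof -
  have "- (s * q * t) \<le> s * \<bar>q\<bar> * \<bar>t\<bar>"
    using \<open>s \<ge> 0\<close> by (metis abs_ge_minus_self abs_mult abs_of_nonneg)
  then have "exp (q * (x - s * t)) \<le> exp (q * x) * exp (s * \<bar>q\<bar> * \<bar>t\<bar>)"
    by (simp add: mult_exp_exp algebra_simps)
  with add_mono[of 1 "exp (s * \<bar>q\<bar> * \<bar>t\<bar>)"]
  have "1 + exp (q * (x - s * t)) \<le> (1 + exp (q * x)) * exp (s * \<bar>q\<bar> * \<bar>t\<bar>)"
    using \<open>s \<ge> 0\<close> by (simp add: distrib_right)
  then show ?thesis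
    using growth[of "x - s * t"] mult_left_mono[OF _ \<open>C \<ge> 0\<close>] by (fastforce simp: mult.assoc)
qed

lemma exp_growth_shift_le_nonneg:
  fixes f :: "real \<Rightarrow> real"
  assumes "q \<le> 0" "C \<ge> 0" "\<And>z. \<bar>f z\<bar> \<le> C * (1 + exp (q * z))" "x \<ge> 0" "0 \<le> s" "s \<le> smax"
  shows "\<bar>f (x - s * t)\<bar> \<le> 2 * C * exp (smax * \<bar>q\<bar> * \<bar>t\<bar>)"
proof -
  have "exp (q * x) \<le> 1" using \<open>q \<le> 0\<close> \<open>x \<ge> 0\<close> by (simp add: mult_nonpos_nonneg)
  moreover have "exp (s * \<bar>q\<bar> * \<bar>t\<bar>) \<le> exp (smax * \<bar>q\<bar> * \<bar>t\<bar>)"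
    using \<open>s \<le> smax\<close> by (simp add: mult_right_mono)
  ultimately have "C * (1 + exp (q * x)) * exp (s * \<bar>q\<bar> * \<bar>t\<bar>) \<le> C * 2 * exp (smax * \<bar>q\<bar> * \<bar>t\<bar>)"
    using \<open>C \<ge> 0\<close> by (intro mult_mono) auto
  from order_trans[OF exp_growth_shift_le[OF assms(2,3,5), of x t] this] show ?thesis
    by (simp add: mult_ac)
qed

lemma exp_growth_shift_le_nonpos:
  fixes f :: "real \<Rightarrow> real"
  assumes "q \<le> 0" "C \<ge> 0" "\<And>z. \<bar>f z\<bar> \<le> C * (1 + exp (q * z))" "x \<le> 0" "0 \<le> s" "s \<le> smax"
  shows "\<bar>f (x - s * t) / exp (q * x + q\<^sup>2 * s\<^sup>2 / 2)\<bar> \<le> 2 * C * exp (smax * \<bar>q\<bar> * \<bar>t\<bar>)"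
proof -
  have "exp (- (q * x)) \<le> 1" using \<open>q \<le> 0\<close> \<open>x \<le> 0\<close> by (simp add: mult_nonpos_nonpos)
  moreover have "exp (s * \<bar>q\<bar> * \<bar>t\<bar>) \<le> exp (smax * \<bar>q\<bar> * \<bar>t\<bar>)"
    using \<open>s \<le> smax\<close> by (simp add: mult_right_mono)
  moreover have "(1 + exp (q * x)) * exp (- (q * x)) = exp (- (q * x)) + 1"
    by (simp add: distrib_right flip: exp_add)
  ultimately have weight: "(1 + exp (q * x)) * exp (- (q * x)) * exp (s * \<bar>q\<bar> * \<bar>t\<bar>)
      \<le> 2 * exp (smax * \<bar>q\<bar> * \<bar>t\<bar>)"
    by (intro mult_mono) auto
  have "\<bar>f (x - s * t) / exp (q * x + q\<^sup>2 * s\<^sup>2 / 2)\<bar> = \<bar>f (x - s * t)\<bar> / exp (q * x + q\<^sup>2 * s\<^sup>2 / 2)"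
    by (simp add: abs_divide)
  also have "\<dots> \<le> \<bar>f (x - s * t)\<bar> / exp (q * x)"
    by (intro divide_left_mono) auto
  also have "\<dots> = \<bar>f (x - s * t)\<bar> * exp (- (q * x))"
    by (metis divide_inverse exp_minus)
  also have "\<dots> \<le> C * ((1 + exp (q * x)) * exp (- (q * x)) * exp (s * \<bar>q\<bar> * \<bar>t\<bar>))"
    using mult_right_mono[OF exp_growth_shift_le[OF assms(2,3,5), of x t] exp_ge_zero[of "- (q * x)"]]
    by (simp only: mult_ac)
  also have "\<dots> \<le> C * (2 * exp (smax * \<bar>q\<bar> * \<bar>t\<bar>))"
    using weight \<open>C \<ge> 0\<close> by (rule mult_left_mono)
  finally show ?thesis by (simp only: mult_ac)
qed

locale exp_growth =
  fixes f :: "real \<Rightarrow> real" and q :: real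
  assumes continuous: "continuous_on UNIV f"
    and growth: "\<exists>C. \<forall>z. \<bar>f z\<bar> \<le> C * (1 + exp (q * z))"
begin

lemma borel_measurable [measurable]: "f \<in> borel_measurable borel"
  using continuous by (rule borel_measurable_continuous_onI)

lemma obtain_growth_constant:
  obtains C where "C \<ge> 0" and "\<And>z. \<bar>f z\<bar> \<le> C * (1 + exp (q * z))"
proof -
  from growth obtain C where C: "\<And>z. \<bar>f z\<bar> \<le> C * (1 + exp (q * z))" by blast
  moreover have "\<bar>f 0\<bar> \<le> 2 * C" using C[of 0] by simp
  then have "C \<ge> 0" using abs_ge_zero[of "f 0"] by linarith
  ultimately show thesis using that by blast
qed

lemma integrable_gauss_integrand:
  assumes "s \<ge> 0" and [measurable]: "Q \<in> borel_measurable borel"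
    and Q: "\<And>t. \<bar>Q t\<bar> \<le> B * exp (K * \<bar>t\<bar>)"
  shows "integrable lborel (\<lambda>t. f (x - s * t) * Q t * std_normal_density t)"
proof -
  obtain C where "C \<ge> 0" and C: "\<And>z. \<bar>f z\<bar> \<le> C * (1 + exp (q * z))"
    using obtain_growth_constant by blast
  define A where "A = C * (1 + exp (q * x)) * B"
  have bound: "\<bar>f (x - s * t) * Q t * std_normal_density t\<bar>
      \<le> A * (std_normal_density t * exp ((s * \<bar>q\<bar> + K) * \<bar>t\<bar>))" for t
  proof -
    have "\<bar>f (x - s * t)\<bar> * \<bar>Q t\<bar> \<le> (C * (1 + exp (q * x)) * exp (s * \<bar>q\<bar> * \<bar>t\<bar>)) * (B * exp (K * \<bar>t\<bar>))"
      by (intro mult_mono exp_growth_shift_le[OF \<open>C \<ge> 0\<close> C \<open>s \<ge> 0\<close>] Q) (use \<open>C \<ge> 0\<close> in auto)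
    also have "\<dots> = A * exp ((s * \<bar>q\<bar> + K) * \<bar>t\<bar>)"
      by (simp add: A_def mult_exp_exp[symmetric] algebra_simps)
    finally have "\<bar>f (x - s * t)\<bar> * \<bar>Q t\<bar> * std_normal_density t
        \<le> A * exp ((s * \<bar>q\<bar> + K) * \<bar>t\<bar>) * std_normal_density t"
      by (rule mult_right_mono) simp
    then show ?thesis by (simp add: abs_mult mult_ac)
  qed
  show ?thesis
  proof (rule Bochner_Integration.integrable_bound)
    show "integrable lborel (\<lambda>t. A * (std_normal_density t * exp ((s * \<bar>q\<bar> + K) * \<bar>t\<bar>)))"
      by (intro integrable_mult_right integrable_std_normal_density_exp_abs)
    show "AE t in lborel. norm (f (x - s * t) * Q t * std_normal_density t)
        \<le> norm (A * (std_normal_density t * exp ((s * \<bar>q\<bar> + K) * \<bar>t\<bar>)))"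
      using order_trans[OF bound abs_ge_self] by (intro AE_I2) simp
  qed measurable
qed

lemma gauss_transform_diff:
  assumes "s \<ge> 0" and "P \<in> borel_measurable borel" "Q \<in> borel_measurable borel"
    and "\<And>t. \<bar>P t\<bar> \<le> B * exp (K * \<bar>t\<bar>)" "\<And>t. \<bar>Q t\<bar> \<le> B * exp (K * \<bar>t\<bar>)"
  shows "gauss_transform f s P x - gauss_transform f s Q x = gauss_transform f s (\<lambda>t. P t - Q t) x"
  using integrable_gauss_integrand[OF \<open>s \<ge> 0\<close> assms(2,4)] integrable_gauss_integrand[OF \<open>s \<ge> 0\<close> assms(3,5)]
  unfolding gauss_transform_def by (simp add: algebra_simps flip: integral_diff)

lemma gauss_transform_has_real_derivative:
  assumes "s > 0"
    and [measurable]: "Q \<in> borel_measurable borel" "R \<in> borel_measurable borel"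
    and Q': "\<And>u. (Q has_real_derivative Q' u) (at u)"
    and R: "\<And>u. R u = Q' u - u * Q u"
    and Q_bound: "\<And>u. \<bar>Q u\<bar> \<le> B * exp \<bar>u\<bar>" and R_bound: "\<And>u. \<bar>R u\<bar> \<le> B * exp \<bar>u\<bar>"
  shows "(gauss_transform f s Q has_real_derivative gauss_transform f s R x0 / s) (at x0)"
proof -
  have "B \<ge> 0" using Q_bound[of 0] abs_ge_zero[of "Q 0"] by simp
  define F where "F x t = f (- (s * t)) * (Q (t + x / s) * std_normal_density (t + x / s))" for x t
  define F' where "F' x t = f (- (s * t)) * (R (t + x / s) * std_normal_density (t + x / s)) / s" for x t
  define W where "W u = B * exp (1 / s) / s * exp ((1 + 1 / s) * \<bar>u\<bar>)" for u
  define w where "w t = \<bar>f (- (s * t))\<bar> * W (t + x0 / s) * std_normal_density (t + x0 / s)" for t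
  have shifted_integrable: "integrable lborel (\<lambda>t. g (x - s * (t + x / s)) * P (t + x / s) * std_normal_density (t + x / s))"
    if "integrable lborel (\<lambda>u. g (x - s * u) * P u * std_normal_density u)" for g P x
    using lborel_integrable_real_affine[OF that, of 1 "x / s"] by (simp add: add.commute)
  have shift: "x - s * (t + x / s) = - (s * t)" for x t
    using \<open>s > 0\<close> by (simp add: field_simps)
  \<comment> \<open>after the shift only the smooth factor \<open>Q \<cdot> \<phi>\<close> depends on \<open>x\<close>\<close>
  have "(gauss_transform f s Q has_real_derivative (\<integral>t. F' x0 t \<partial>lborel)) (at x0)"
    unfolding gauss_transform_shift[OF \<open>s > 0\<close>, abs_def] F_def[symmetric]
  proof (rule has_real_derivative_integral[where w = w])
    show "integrable lborel (F x)" for x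
      using shifted_integrable[OF integrable_gauss_integrand[of s Q B 1 x]] \<open>s > 0\<close> Q_bound
      by (simp add: F_def[abs_def] shift mult.assoc)
    show "((\<lambda>x. F x t) has_real_derivative F' x t) (at x)" for x t
    proof -
      have inner: "((\<lambda>x. t + x / s) has_real_derivative 1 / s) (at x)"
        using \<open>s > 0\<close> by (auto intro!: derivative_eq_intros)
      have "((\<lambda>x. F x t) has_real_derivative f (- (s * t)) * (Q' (t + x / s) * (1 / s) * std_normal_density (t + x / s)
          + (- (t + x / s) * std_normal_density (t + x / s)) * (1 / s) * Q (t + x / s))) (at x)"
        unfolding F_def
        by (intro DERIV_cmult DERIV_mult DERIV_chain2[OF Q' inner]
            DERIV_chain2[OF has_real_derivative_std_normal_density inner])
      then show ?thesis
        by (rule DERIV_cong) (use \<open>s > 0\<close> in \<open>simp add: F'_def R field_simps\<close>)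
    qed
    show "F' x0 \<in> borel_measurable lborel" unfolding F'_def[abs_def] by measurable
    have "integrable lborel (\<lambda>u. \<bar>f (x0 - s * u) * W u * std_normal_density u\<bar>)"
      by (intro integrable_abs integrable_gauss_integrand[of s W "B * exp (1 / s) / s" "1 + 1 / s"])
        (use \<open>s > 0\<close> \<open>B \<ge> 0\<close> in \<open>auto simp: W_def[abs_def] abs_mult\<close>)
    then have "integrable lborel (\<lambda>u. \<bar>f (x0 - s * u)\<bar> * W u * std_normal_density u)"
      using \<open>B \<ge> 0\<close> \<open>s > 0\<close> by (simp add: abs_mult W_def)
    then show "integrable lborel w"
      using shifted_integrable[where g = "\<lambda>z. \<bar>f z\<bar>" and P = W and x = x0] by (simp add: w_def[abs_def] shift)
    show "\<bar>F' x t\<bar> \<le> w t" if "\<bar>x - x0\<bar> \<le> 1" for x t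
    proof -
      define u0 d where "u0 = t + x0 / s" and "d = (x - x0) / s"
      have ud: "t + x / s = u0 + d" by (simp add: u0_def d_def diff_divide_distrib)
      have "\<bar>d\<bar> \<le> 1 / s" using that \<open>s > 0\<close> by (simp add: d_def abs_divide divide_right_mono)
      then have "exp \<bar>u0 + d\<bar> \<le> exp (1 / s) * exp \<bar>u0\<bar>"
        by (simp flip: exp_add)
      then have "\<bar>R (u0 + d)\<bar> \<le> B * (exp (1 / s) * exp \<bar>u0\<bar>)"
        using R_bound[of "u0 + d"] \<open>B \<ge> 0\<close> by (meson mult_left_mono order_trans)
      moreover have "std_normal_density (u0 + d) \<le> std_normal_density u0 * exp (1 / s * \<bar>u0\<bar>)"
        by (rule std_normal_density_shift_le) fact
      ultimately have "\<bar>R (u0 + d)\<bar> * std_normal_density (u0 + d)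
          \<le> (B * (exp (1 / s) * exp \<bar>u0\<bar>)) * (std_normal_density u0 * exp (1 / s * \<bar>u0\<bar>))"
        using \<open>B \<ge> 0\<close> by (intro mult_mono) auto
      also have "\<dots> = W u0 * s * std_normal_density u0"
        using \<open>s > 0\<close> by (simp add: W_def mult_exp_exp[symmetric] algebra_simps)
      finally have "\<bar>R (u0 + d)\<bar> * std_normal_density (u0 + d) / s \<le> W u0 * std_normal_density u0"
        using \<open>s > 0\<close> by (simp add: divide_le_eq mult_ac)
      moreover have "\<bar>F' x t\<bar> = \<bar>f (- (s * t))\<bar> * (\<bar>R (u0 + d)\<bar> * std_normal_density (u0 + d) / s)"
        using \<open>s > 0\<close> by (simp add: F'_def ud abs_mult)
      ultimately show ?thesis
        unfolding w_def u0_def[symmetric] by (metis abs_ge_zero mult.assoc mult_left_mono)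
    qed
  qed
  moreover have "(\<integral>t. F' x0 t \<partial>lborel) = gauss_transform f s R x0 / s"
    unfolding F'_def gauss_transform_shift[OF \<open>s > 0\<close>] by simp
  ultimately show ?thesis by simp
qed

lemma gauss_transform_ln_has_real_derivative:
  assumes "s > 0" "y > 0"
    and "Q \<in> borel_measurable borel" "R \<in> borel_measurable borel"
    and "\<And>u. (Q has_real_derivative Q' u) (at u)" "\<And>u. R u = Q' u - u * Q u"
    and "\<And>u. \<bar>Q u\<bar> \<le> B * exp \<bar>u\<bar>" "\<And>u. \<bar>R u\<bar> \<le> B * exp \<bar>u\<bar>"
  shows "((\<lambda>y. gauss_transform f s Q (ln y - c)) has_real_derivative
      gauss_transform f s (\<lambda>u. R u / s) (ln y - c) / y) (at y)"
proof -
  have "((\<lambda>y. ln y - c) has_real_derivative 1 / y) (at y)"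
    using \<open>y > 0\<close> by (auto intro!: derivative_eq_intros)
  from DERIV_chain2[OF gauss_transform_has_real_derivative[OF assms(1,3-)] this]
  show ?thesis by (simp add: gauss_transform_divide)
qed

end

section \<open>Asymptotics of Gaussian transforms\<close>

lemma exp_growth_of_limits:
  fixes f :: "real \<Rightarrow> real"
  assumes "continuous_on UNIV f" and "(f \<longlongrightarrow> a) at_top"
    and "((\<lambda>z. f z * exp (- (q * z))) \<longlongrightarrow> b) at_bot"
  shows "\<exists>C. \<forall>z. \<bar>f z\<bar> \<le> C * (1 + exp (q * z))"
proof -
  have "eventually (\<lambda>z. dist (f z) a < 1) at_top"
    using assms(2) by (rule tendstoD) simp
  then obtain M2 where top: "\<And>z. z \<ge> M2 \<Longrightarrow> \<bar>f z\<bar> \<le> \<bar>a\<bar> + 1"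
    by (force simp: eventually_at_top_linorder dist_real_def)
  have "eventually (\<lambda>z. dist (f z * exp (- (q * z))) b < 1) at_bot"
    using assms(3) by (rule tendstoD) simp
  then obtain M1 where "\<And>z. z \<le> M1 \<Longrightarrow> \<bar>f z * exp (- (q * z))\<bar> \<le> \<bar>b\<bar> + 1"
    by (force simp: eventually_at_bot_linorder dist_real_def)
  then have bot: "\<bar>f z\<bar> \<le> (\<bar>b\<bar> + 1) * exp (q * z)" if "z \<le> M1" for z
  proof -
    have "\<bar>f z\<bar> = \<bar>f z * exp (- (q * z))\<bar> * exp (q * z)"
      by (simp add: abs_mult mult.assoc flip: exp_add)
    with \<open>z \<le> M1 \<Longrightarrow> _\<close>[OF that] show ?thesis by (simp add: mult_right_mono)
  qed
  have "bounded (f ` {M1..M2})"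
    by (intro compact_imp_bounded compact_continuous_image continuous_on_subset[OF assms(1)]) auto
  then obtain K where mid: "\<forall>z\<in>{M1..M2}. \<bar>f z\<bar> \<le> K"
    by (auto simp: bounded_iff)
  define C where "C = \<bar>a\<bar> + \<bar>b\<bar> + \<bar>K\<bar> + 1"
  have "\<bar>f z\<bar> \<le> C * (1 + exp (q * z))" for z
  proof -
    have C_le: "C \<le> C * (1 + exp (q * z))"
      by (simp add: C_def distrib_left)
    consider "z \<le> M1" | "z \<ge> M2" | "z \<in> {M1..M2}" by fastforce
    then show ?thesis
    proof cases
      case 1
      have "(\<bar>b\<bar> + 1) * exp (q * z) \<le> C * (1 + exp (q * z))"
        by (intro mult_mono) (auto simp: C_def)
      with bot[OF 1] show ?thesis by linarith
    next
      case 2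
      with top[of z] C_le abs_ge_zero[of b] abs_ge_zero[of K] show ?thesis
        unfolding C_def by linarith
    next
      case 3
      with mid C_le abs_ge_zero[of a] abs_ge_zero[of b] abs_ge_self[of K] show ?thesis
        unfolding C_def by fastforce
    qed
  qed
  then show ?thesis by (intro exI[of _ C] allI)
qed

locale exp_asymptotic =
  fixes f :: "real \<Rightarrow> real" and q :: real
  assumes continuous_f: "continuous_on UNIV f" and nonpos: "q \<le> 0"
    and vanishing_at_top: "(f \<longlongrightarrow> 0) at_top"
    and asymptotic_at_bot: "((\<lambda>z. f z * exp (- (q * z))) \<longlongrightarrow> 1) at_bot"

sublocale exp_asymptotic \<subseteq> exp_growth
proof
  show "continuous_on UNIV f" by (fact continuous_f)
  show "\<exists>C. \<forall>z. \<bar>f z\<bar> \<le> C * (1 + exp (q * z))"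
    by (fact exp_growth_of_limits[OF continuous_f vanishing_at_top asymptotic_at_bot])
qed

context exp_asymptotic
begin

lemma gauss_transform_tendsto_at_top:
  assumes X: "filterlim X at_top sequentially"
    and S: "\<And>n. 0 \<le> S n \<and> S n \<le> smax"
    and [measurable]: "\<And>n. P n \<in> borel_measurable borel"
    and P: "\<And>n t. \<bar>P n t\<bar> \<le> B * exp \<bar>t\<bar>"
  shows "(\<lambda>n. gauss_transform f (S n) (P n) (X n)) \<longlonglongrightarrow> 0"
proof -
  obtain C where "C \<ge> 0" and C: "\<And>z. \<bar>f z\<bar> \<le> C * (1 + exp (q * z))"
    using obtain_growth_constant by blast
  define w where "w t = 2 * C * B * (std_normal_density t * exp ((smax * \<bar>q\<bar> + 1) * \<bar>t\<bar>))" for t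
  have "(\<lambda>n. \<integral>t. f (X n - S n * t) * P n t * std_normal_density t \<partial>lborel) \<longlonglongrightarrow> integral\<^sup>L lborel (\<lambda>t::real. 0::real)"
  proof (rule integral_dominated_convergence_eventually[where w = w])
    show "integrable lborel w"
      unfolding w_def by (intro integrable_mult_right integrable_std_normal_density_exp_abs)
    show "(\<lambda>n. f (X n - S n * t) * P n t * std_normal_density t) \<longlonglongrightarrow> 0" for t
    proof (rule Lim_null_comparison)
      have "filterlim (\<lambda>n. X n - smax * \<bar>t\<bar>) at_top sequentially"
        by (rule filterlim_tendsto_add_at_top[OF tendsto_const X, of "- smax * \<bar>t\<bar>", simplified])
      moreover have "X n - smax * \<bar>t\<bar> \<le> X n - S n * t" for n
      proof -
        have "S n * t \<le> S n * \<bar>t\<bar>" using S[of n] by (intro mult_left_mono) auto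
        also have "\<dots> \<le> smax * \<bar>t\<bar>" using S[of n] by (intro mult_right_mono) auto
        finally show ?thesis by simp
      qed
      ultimately have "filterlim (\<lambda>n. X n - S n * t) at_top sequentially"
        by (auto intro: filterlim_at_top_mono)
      then show "(\<lambda>n. \<bar>f (X n - S n * t)\<bar> * (B * exp \<bar>t\<bar>) * std_normal_density t) \<longlonglongrightarrow> 0"
        by (intro tendsto_mult_left_zero tendsto_rabs_zero filterlim_compose[OF vanishing_at_top])
      show "eventually (\<lambda>n. norm (f (X n - S n * t) * P n t * std_normal_density t)
          \<le> \<bar>f (X n - S n * t)\<bar> * (B * exp \<bar>t\<bar>) * std_normal_density t) sequentially"
        unfolding real_norm_def using P
        by (intro always_eventually allI abs_mult_std_normal_density_le mult_left_mono) auto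
    qed
    have "eventually (\<lambda>n. X n \<ge> 0) sequentially"
      using X by (simp add: filterlim_at_top)
    then show "eventually (\<lambda>n. \<forall>t. \<bar>f (X n - S n * t) * P n t * std_normal_density t\<bar> \<le> w t) sequentially"
    proof (rule eventually_mono, intro allI)
      fix n t assume "X n \<ge> 0"
      have "\<bar>f (X n - S n * t)\<bar> * \<bar>P n t\<bar> \<le> (2 * C * exp (smax * \<bar>q\<bar> * \<bar>t\<bar>)) * (B * exp \<bar>t\<bar>)"
        using S[of n] \<open>C \<ge> 0\<close>
        by (intro mult_mono exp_growth_shift_le_nonneg[OF nonpos \<open>C \<ge> 0\<close> C \<open>X n \<ge> 0\<close>] P) auto
      also have "\<dots> = 2 * C * B * exp ((smax * \<bar>q\<bar> + 1) * \<bar>t\<bar>)"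
        by (simp add: algebra_simps mult_exp_exp)
      finally have "\<bar>f (X n - S n * t)\<bar> * \<bar>P n t\<bar> \<le> 2 * C * B * exp ((smax * \<bar>q\<bar> + 1) * \<bar>t\<bar>)" .
      from abs_mult_std_normal_density_le[OF this]
      show "\<bar>f (X n - S n * t) * P n t * std_normal_density t\<bar> \<le> w t"
        unfolding w_def by (simp only: mult_ac)
    qed
  qed measurable
  then show ?thesis by (simp add: gauss_transform_def)
qed

lemma gauss_transform_tendsto_at_bot:
  assumes X: "filterlim X at_bot sequentially"
    and S_lim: "S \<longlonglongrightarrow> s" and S: "\<And>n. 0 \<le> S n \<and> S n \<le> smax"
    and [measurable]: "\<And>n. P n \<in> borel_measurable borel" "P_lim \<in> borel_measurable borel"
    and P: "\<And>n t. \<bar>P n t\<bar> \<le> B * exp \<bar>t\<bar>" and P_tendsto: "\<And>t. (\<lambda>n. P n t) \<longlonglongrightarrow> P_lim t"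
  shows "(\<lambda>n. gauss_transform f (S n) (P n) (X n) / exp (q * X n + q\<^sup>2 * (S n)\<^sup>2 / 2))
    \<longlonglongrightarrow> (\<integral>t. normal_density (- (q * s)) 1 t * P_lim t \<partial>lborel)"
proof -
  obtain C where "C \<ge> 0" and C: "\<And>z. \<bar>f z\<bar> \<le> C * (1 + exp (q * z))"
    using obtain_growth_constant by blast
  define E where "E n = exp (q * X n + q\<^sup>2 * (S n)\<^sup>2 / 2)" for n
  define w where "w t = 2 * C * B * (std_normal_density t * exp ((smax * \<bar>q\<bar> + 1) * \<bar>t\<bar>))" for t
  have "(\<lambda>n. \<integral>t. f (X n - S n * t) / E n * P n t * std_normal_density t \<partial>lborel)
      \<longlonglongrightarrow> (\<integral>t. normal_density (- (q * s)) 1 t * P_lim t \<partial>lborel)"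
  proof (rule integral_dominated_convergence_eventually[where w = w])
    show "integrable lborel w"
      unfolding w_def by (intro integrable_mult_right integrable_std_normal_density_exp_abs)
    show "(\<lambda>n. f (X n - S n * t) / E n * P n t * std_normal_density t)
        \<longlonglongrightarrow> normal_density (- (q * s)) 1 t * P_lim t" for t
    proof -
      have "filterlim (\<lambda>n. - X n) at_top sequentially"
        using X by (simp add: filterlim_uminus_at_bot)
      then have "filterlim (\<lambda>n. S n * t + - X n) at_top sequentially"
        by (rule filterlim_tendsto_add_at_top[OF tendsto_mult[OF S_lim tendsto_const]])
      then have "filterlim (\<lambda>n. X n - S n * t) at_bot sequentially"
        by (simp add: filterlim_uminus_at_bot algebra_simps)
      then have "(\<lambda>n. f (X n - S n * t) * exp (- (q * (X n - S n * t)))) \<longlonglongrightarrow> 1"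
        by (rule filterlim_compose[OF asymptotic_at_bot])
      moreover have "(\<lambda>n. exp (- (q * S n) * t - (q * S n)\<^sup>2 / 2)) \<longlonglongrightarrow> exp (- (q * s) * t - (q * s)\<^sup>2 / 2)"
        by (intro tendsto_intros S_lim) simp_all
      ultimately have "(\<lambda>n. f (X n - S n * t) * exp (- (q * (X n - S n * t))) * exp (- (q * S n) * t - (q * S n)\<^sup>2 / 2)
          * P n t * std_normal_density t)
          \<longlonglongrightarrow> 1 * exp (- (q * s) * t - (q * s)\<^sup>2 / 2) * P_lim t * std_normal_density t"
        using S_lim by (intro tendsto_intros P_tendsto) simp_all
      moreover have "f (X n - S n * t) * exp (- (q * (X n - S n * t))) * exp (- (q * S n) * t - (q * S n)\<^sup>2 / 2)
          = f (X n - S n * t) / E n" for n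
      proof -
        have "- (q * (X n - S n * t)) + (- (q * S n) * t - (q * S n)\<^sup>2 / 2) = - (q * X n + q\<^sup>2 * (S n)\<^sup>2 / 2)"
          by (simp add: power_mult_distrib algebra_simps)
        then have "exp (- (q * (X n - S n * t))) * exp (- (q * S n) * t - (q * S n)\<^sup>2 / 2) = exp (- (q * X n + q\<^sup>2 * (S n)\<^sup>2 / 2))"
          by (simp flip: exp_add)
        then show ?thesis
          unfolding E_def by (metis divide_inverse exp_minus mult.assoc)
      qed
      ultimately show ?thesis
        using normal_density_exp_tilt[of "- (q * s)" t] by (simp add: mult_ac)
    qed
    have "eventually (\<lambda>n. X n \<le> 0) sequentially"
      using X by (simp add: filterlim_at_bot)
    then show "eventually (\<lambda>n. \<forall>t. \<bar>f (X n - S n * t) / E n * P n t * std_normal_density t\<bar> \<le> w t) sequentially"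
    proof (rule eventually_mono, intro allI)
      fix n t assume "X n \<le> 0"
      have "\<bar>f (X n - S n * t) / E n\<bar> * \<bar>P n t\<bar> \<le> (2 * C * exp (smax * \<bar>q\<bar> * \<bar>t\<bar>)) * (B * exp \<bar>t\<bar>)"
        unfolding E_def using S[of n] \<open>C \<ge> 0\<close>
        by (intro mult_mono exp_growth_shift_le_nonpos[OF nonpos \<open>C \<ge> 0\<close> C \<open>X n \<le> 0\<close>] P) auto
      also have "\<dots> = 2 * C * B * exp ((smax * \<bar>q\<bar> + 1) * \<bar>t\<bar>)"
        by (simp add: algebra_simps mult_exp_exp)
      finally have "\<bar>f (X n - S n * t) / E n\<bar> * \<bar>P n t\<bar> \<le> 2 * C * B * exp ((smax * \<bar>q\<bar> + 1) * \<bar>t\<bar>)" .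
      from abs_mult_std_normal_density_le[OF this]
      show "\<bar>f (X n - S n * t) / E n * P n t * std_normal_density t\<bar> \<le> w t"
        unfolding w_def by (simp only: mult_ac)
    qed
  qed measurable
  moreover have "gauss_transform f (S n) (P n) (X n) / E n
      = (\<integral>t. f (X n - S n * t) / E n * P n t * std_normal_density t \<partial>lborel)" for n
    unfolding gauss_transform_def by (simp add: mult_ac flip: integral_divide_zero)
  ultimately show ?thesis by (simp add: E_def)
qed

lemma uniform_limit_gauss_transform_at_top:
  fixes \<sigma> \<mu> :: "real \<Rightarrow> real" and P :: "real \<Rightarrow> real \<Rightarrow> real"
  assumes K: "compact K" and \<sigma>: "continuous_on K \<sigma>" "\<And>\<tau>. \<tau> \<in> K \<Longrightarrow> \<sigma> \<tau> \<ge> 0"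
    and \<mu>: "continuous_on K \<mu>"
    and [measurable]: "\<And>s. P s \<in> borel_measurable borel"
    and P: "\<And>s t. s \<in> \<sigma> ` K \<Longrightarrow> \<bar>P s t\<bar> \<le> B * exp \<bar>t\<bar>"
  shows "uniform_limit K (\<lambda>y \<tau>. gauss_transform f (\<sigma> \<tau>) (P (\<sigma> \<tau>)) (ln y - \<mu> \<tau>)) (\<lambda>\<tau>. 0) at_top"
proof (rule uniform_limit_sequentiallyI[OF K continuous_on_const eventually_at_top_sequentiallyI])
  have "bounded (\<sigma> ` K)"
    by (intro compact_imp_bounded compact_continuous_image \<sigma> K)
  then obtain smax where smax: "\<And>\<tau>. \<tau> \<in> K \<Longrightarrow> \<sigma> \<tau> \<le> smax"
    by (auto simp: bounded_iff dest: abs_le_D1)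
  fix Y T :: "nat \<Rightarrow> real" and \<tau> :: real assume Y: "filterlim Y at_top sequentially" and T: "\<And>n. T n \<in> K"
    and T_lim: "T \<longlonglongrightarrow> \<tau>" and "\<tau> \<in> K"
  have "(\<lambda>n. \<mu> (T n)) \<longlonglongrightarrow> \<mu> \<tau>"
    using continuous_on_tendsto_compose[OF \<mu> T_lim \<open>\<tau> \<in> K\<close>] T by simp
  then have "filterlim (\<lambda>n. - \<mu> (T n) + ln (Y n)) at_top sequentially"
    by (rule filterlim_tendsto_add_at_top[OF tendsto_minus filterlim_compose[OF ln_at_top Y]])
  then show "(\<lambda>n. gauss_transform f (\<sigma> (T n)) (P (\<sigma> (T n))) (ln (Y n) - \<mu> (T n))) \<longlonglongrightarrow> 0"
    by (intro gauss_transform_tendsto_at_top[where smax = smax and B = B])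
      (use T \<sigma>(2) smax P in auto)
qed

lemma uniform_limit_gauss_transform_at_right_0:
  fixes \<sigma> \<mu> :: "real \<Rightarrow> real" and P :: "real \<Rightarrow> real \<Rightarrow> real"
  assumes K: "compact K" and \<sigma>: "continuous_on K \<sigma>" "\<And>\<tau>. \<tau> \<in> K \<Longrightarrow> \<sigma> \<tau> \<ge> 0"
    and \<mu>: "continuous_on K \<mu>"
    and [measurable]: "\<And>s. P s \<in> borel_measurable borel"
    and P: "\<And>s t. s \<in> \<sigma> ` K \<Longrightarrow> \<bar>P s t\<bar> \<le> B * exp \<bar>t\<bar>"
    and P_cont: "\<And>s t. s \<in> \<sigma> ` K \<Longrightarrow> isCont (\<lambda>s. P s t) s"
    and P_mean: "\<And>s. s \<in> \<sigma> ` K \<Longrightarrow> (\<integral>t. normal_density (- (q * s)) 1 t * P s t \<partial>lborel) = c"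
  shows "uniform_limit K (\<lambda>y \<tau>. gauss_transform f (\<sigma> \<tau>) (P (\<sigma> \<tau>)) (ln y - \<mu> \<tau>)
    / exp (q * (ln y - \<mu> \<tau>) + q\<^sup>2 * (\<sigma> \<tau>)\<^sup>2 / 2)) (\<lambda>\<tau>. c) (at_right 0)"
proof (rule uniform_limit_sequentiallyI[OF K continuous_on_const eventually_at_right_sequentiallyI])
  have "bounded (\<sigma> ` K)"
    by (intro compact_imp_bounded compact_continuous_image \<sigma> K)
  then obtain smax where smax: "\<And>\<tau>. \<tau> \<in> K \<Longrightarrow> \<sigma> \<tau> \<le> smax"
    by (auto simp: bounded_iff dest: abs_le_D1)
  fix Y T :: "nat \<Rightarrow> real" and \<tau> :: real assume Y: "filterlim Y (at_right 0) sequentially" and T: "\<And>n. T n \<in> K"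
    and T_lim: "T \<longlonglongrightarrow> \<tau>" and "\<tau> \<in> K"
  have "(\<lambda>n. \<mu> (T n)) \<longlonglongrightarrow> \<mu> \<tau>"
    using continuous_on_tendsto_compose[OF \<mu> T_lim \<open>\<tau> \<in> K\<close>] T by simp
  moreover have "filterlim (\<lambda>n. - ln (Y n)) at_top sequentially"
    using filterlim_compose[OF ln_at_0 Y] by (simp add: filterlim_uminus_at_bot)
  ultimately have "filterlim (\<lambda>n. \<mu> (T n) + - ln (Y n)) at_top sequentially"
    by (rule filterlim_tendsto_add_at_top)
  then have X: "filterlim (\<lambda>n. ln (Y n) - \<mu> (T n)) at_bot sequentially"
    by (simp add: filterlim_uminus_at_bot algebra_simps)
  have S_lim: "(\<lambda>n. \<sigma> (T n)) \<longlonglongrightarrow> \<sigma> \<tau>"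
    using continuous_on_tendsto_compose[OF \<sigma>(1) T_lim \<open>\<tau> \<in> K\<close>] T by simp
  have "(\<lambda>n. gauss_transform f (\<sigma> (T n)) (P (\<sigma> (T n))) (ln (Y n) - \<mu> (T n))
      / exp (q * (ln (Y n) - \<mu> (T n)) + q\<^sup>2 * (\<sigma> (T n))\<^sup>2 / 2))
    \<longlonglongrightarrow> (\<integral>t. normal_density (- (q * \<sigma> \<tau>)) 1 t * P (\<sigma> \<tau>) t \<partial>lborel)"
    using T \<sigma>(2) smax P \<open>\<tau> \<in> K\<close>
    by (intro gauss_transform_tendsto_at_bot[OF X S_lim, where smax = smax and B = B]
        isCont_tendsto_compose[OF P_cont S_lim]) auto
  then show "(\<lambda>n. gauss_transform f (\<sigma> (T n)) (P (\<sigma> (T n))) (ln (Y n) - \<mu> (T n))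
      / exp (q * (ln (Y n) - \<mu> (T n)) + q\<^sup>2 * (\<sigma> (T n))\<^sup>2 / 2)) \<longlonglongrightarrow> c"
    using P_mean \<open>\<tau> \<in> K\<close> by simp
qed

end

section \<open>The dual value function\<close>

definition slope_kernel :: "real \<Rightarrow> real \<Rightarrow> real" where
  "slope_kernel s t = - t / s"

definition curvature_kernel :: "real \<Rightarrow> real \<Rightarrow> real" where
  "curvature_kernel s t = (t\<^sup>2 - 1) / s\<^sup>2 + t / s"

lemma borel_measurable_slope_kernel [measurable]: "slope_kernel s \<in> borel_measurable borel"
  unfolding slope_kernel_def[abs_def] by measurable

lemma borel_measurable_curvature_kernel [measurable]: "curvature_kernel s \<in> borel_measurable borel"
  unfolding curvature_kernel_def[abs_def] by measurable

lemma isCont_slope_kernel: "s \<noteq> 0 \<Longrightarrow> isCont (\<lambda>s. slope_kernel s t) s"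
  unfolding slope_kernel_def by (auto intro!: continuous_intros)

lemma isCont_curvature_kernel: "s \<noteq> 0 \<Longrightarrow> isCont (\<lambda>s. curvature_kernel s t) s"
  unfolding curvature_kernel_def by (auto intro!: continuous_intros)

lemma slope_kernel_bound:
  assumes "0 < s0" "s0 \<le> s"
  shows "\<bar>slope_kernel s t\<bar> \<le> 1 / s0 * exp \<bar>t\<bar>"
proof -
  have "\<bar>slope_kernel s t\<bar> = \<bar>t\<bar> / s" using assms by (simp add: slope_kernel_def abs_divide)
  also have "\<dots> \<le> exp \<bar>t\<bar> / s0"
    using assms abs_le_exp_abs[of t] by (intro frac_le) auto
  finally show ?thesis by simp
qed

lemma curvature_kernel_bound:
  assumes "0 < s0" "s0 \<le> s"
  shows "\<bar>curvature_kernel s t\<bar> \<le> (4 / s0\<^sup>2 + 1 / s0) * exp \<bar>t\<bar>"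
proof -
  have "\<bar>(t\<^sup>2 - 1) / s\<^sup>2\<bar> = \<bar>t\<^sup>2 - 1\<bar> / s\<^sup>2" by (simp add: abs_divide)
  also have "\<dots> \<le> 4 * exp \<bar>t\<bar> / s0\<^sup>2"
    using assms abs_power2_minus_one_le_exp_abs[of t] by (intro frac_le power_mono) auto
  finally have "\<bar>(t\<^sup>2 - 1) / s\<^sup>2\<bar> \<le> 4 * exp \<bar>t\<bar> / s0\<^sup>2" .
  moreover have "\<bar>t / s\<bar> \<le> 1 / s0 * exp \<bar>t\<bar>"
    using slope_kernel_bound[OF assms, of t] by (simp add: slope_kernel_def abs_divide)
  moreover have "\<bar>curvature_kernel s t\<bar> \<le> \<bar>(t\<^sup>2 - 1) / s\<^sup>2\<bar> + \<bar>t / s\<bar>"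
    unfolding curvature_kernel_def by (rule abs_triangle_ineq)
  moreover have "4 * exp \<bar>t\<bar> / s0\<^sup>2 + 1 / s0 * exp \<bar>t\<bar> = (4 / s0\<^sup>2 + 1 / s0) * exp \<bar>t\<bar>"
    by (simp add: algebra_simps)
  ultimately show ?thesis by linarith
qed

lemma normal_mean_slope_kernel:
  assumes "s \<noteq> 0"
  shows "(\<integral>t. normal_density (- (q * s)) 1 t * slope_kernel s t \<partial>lborel) = q"
proof -
  have "has_bochner_integral lborel (\<lambda>t. - (normal_density (- (q * s)) 1 t * t) / s) (- (- (q * s)) / s)"
    by (intro has_bochner_integral_divide_zero has_bochner_integral_minus normal_moment_nz_1) simp
  then show ?thesis
    using assms by (simp add: slope_kernel_def has_bochner_integral_iff)
qed

lemma normal_mean_curvature_kernel: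
  assumes "s \<noteq> 0"
  shows "(\<integral>t. normal_density (- (q * s)) 1 t * curvature_kernel s t \<partial>lborel) = q * (q - 1)"
proof -
  define \<mu> where "\<mu> = - (q * s)"
  have "has_bochner_integral lborel
      (\<lambda>t. normal_density \<mu> 1 t * t\<^sup>2 / s\<^sup>2 - normal_density \<mu> 1 t / s\<^sup>2 + normal_density \<mu> 1 t * t / s)
      ((1 + \<mu>\<^sup>2) / s\<^sup>2 - 1 / s\<^sup>2 + \<mu> / s)"
    using has_bochner_integral_integrable[OF integrable_normal_density[of 1 \<mu>]]
    by (intro has_bochner_integral_diff has_bochner_integral_add has_bochner_integral_divide_zero
        has_bochner_integral_normal_density_square normal_moment_nz_1) simp_all
  moreover have "(1 + \<mu>\<^sup>2) / s\<^sup>2 - 1 / s\<^sup>2 + \<mu> / s = q * (q - 1)"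
    using assms by (simp add: \<mu>_def field_simps power2_eq_square)
  ultimately show ?thesis
    unfolding \<mu>_def[symmetric] curvature_kernel_def
    by (simp add: has_bochner_integral_iff ring_distribs diff_divide_distrib)
qed

lemma dual_v_eq_gauss_transform:
  assumes "continuous_on {0<..} U" and "\<tau> > 0" and "y > 0"
  shows "dual_v r \<theta> U \<tau> y
    = gauss_transform (\<lambda>z. U (exp z)) (\<theta> * sqrt \<tau>) (\<lambda>_. 1) (ln y - (r + \<theta>\<^sup>2 / 2) * \<tau>)"
proof -
  define f where "f z = U (exp z)" for z
  have [measurable]: "f \<in> borel_measurable borel"
    unfolding f_def using assms(1)
    by (intro borel_measurable_continuous_onI continuous_on_compose2[OF assms(1)])
      (auto intro!: continuous_intros)
  define x where "x = ln y - (r + \<theta>\<^sup>2 / 2) * \<tau>"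
  have U_eq: "U (y * exp (- (r + \<theta>\<^sup>2 / 2) * \<tau> - \<theta> * w)) = f (x - \<theta> * w)" for w
  proof -
    have "x - \<theta> * w = ln y + (- (r + \<theta>\<^sup>2 / 2) * \<tau> - \<theta> * w)" by (simp add: x_def algebra_simps)
    then have "exp (x - \<theta> * w) = y * exp (- (r + \<theta>\<^sup>2 / 2) * \<tau> - \<theta> * w)"
      using \<open>y > 0\<close> by (simp only: exp_add exp_ln)
    then show ?thesis by (simp add: f_def)
  qed
  have "sqrt \<tau> > 0" using \<open>\<tau> > 0\<close> by simp
  have "dual_v r \<theta> U \<tau> y = (\<integral>w. normal_density 0 (sqrt \<tau>) w * f (x - \<theta> * w) \<partial>lborel)"
    unfolding dual_v_def U_eq bm_law_def by (subst integral_density) auto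
  also have "\<dots> = sqrt \<tau> * (\<integral>t. normal_density 0 (sqrt \<tau>) (sqrt \<tau> * t) * f (x - \<theta> * (sqrt \<tau> * t)) \<partial>lborel)"
    using lborel_integral_real_affine[where f = "\<lambda>w. normal_density 0 (sqrt \<tau>) w * f (x - \<theta> * w)"
        and c = "sqrt \<tau>" and t = 0] \<open>sqrt \<tau> > 0\<close>
    by simp
  also have "\<dots> = (\<integral>t. sqrt \<tau> * (normal_density 0 (sqrt \<tau>) (sqrt \<tau> * t) * f (x - \<theta> * (sqrt \<tau> * t))) \<partial>lborel)"
    by simp
  also have "\<dots> = (\<integral>t. f (x - \<theta> * sqrt \<tau> * t) * 1 * std_normal_density t \<partial>lborel)"
  proof (rule Bochner_Integration.integral_cong)
    fix t
    have scale: "sqrt \<tau> * normal_density 0 (sqrt \<tau>) (sqrt \<tau> * t) = std_normal_density t"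
      using \<open>sqrt \<tau> > 0\<close> unfolding normal_density_def by (simp add: real_sqrt_mult power_mult_distrib)
    show "sqrt \<tau> * (normal_density 0 (sqrt \<tau>) (sqrt \<tau> * t) * f (x - \<theta> * (sqrt \<tau> * t)))
        = f (x - \<theta> * sqrt \<tau> * t) * 1 * std_normal_density t"
      by (simp add: mult_ac flip: scale)
  qed simp
  finally show ?thesis by (simp add: gauss_transform_def f_def x_def)
qed

lemma exp_dual_lambda_mult_powr:
  assumes "\<tau> \<ge> 0" and "y > 0"
  shows "exp (dual_lambda r \<theta> q * \<tau>) * y powr q
    = exp (q * (ln y - (r + \<theta>\<^sup>2 / 2) * \<tau>) + q\<^sup>2 * (\<theta> * sqrt \<tau>)\<^sup>2 / 2)"
proof -
  have "dual_lambda r \<theta> q * \<tau> + q * ln y = q * (ln y - (r + \<theta>\<^sup>2 / 2) * \<tau>) + q\<^sup>2 * (\<theta> * sqrt \<tau>)\<^sup>2 / 2"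
    using assms by (simp add: dual_lambda_def power_mult_distrib field_simps power2_eq_square)
  then show ?thesis
    using \<open>y > 0\<close> by (simp add: powr_def mult.commute flip: exp_add)
qed

locale dual_problem =
  fixes r \<theta> q :: real and U :: "real \<Rightarrow> real"
  assumes \<theta>_pos: "\<theta> > 0" and q_neg: "q < 0"
    and U_continuous: "continuous_on {0<..} U"
    and U_at_top: "(U \<longlongrightarrow> 0) at_top"
    and U_at_0: "((\<lambda>y. U y / y powr q) \<longlongrightarrow> 1) (at_right 0)"

sublocale dual_problem \<subseteq> exp_asymptotic "\<lambda>z. U (exp z)" q
proof
  show "continuous_on UNIV (\<lambda>z. U (exp z))"
    by (rule continuous_on_compose2[OF U_continuous]) (auto intro!: continuous_intros)
  show "q \<le> 0" using q_neg by simp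
  show "((\<lambda>z. U (exp z)) \<longlongrightarrow> 0) at_top"
    by (rule filterlim_compose[OF U_at_top exp_at_top])
  have "filterlim (exp :: real \<Rightarrow> real) (at_right 0) at_bot"
    using exp_at_bot by (intro tendsto_imp_filterlim_at_right) auto
  from filterlim_compose[OF U_at_0 this]
  show "((\<lambda>z. U (exp z) * exp (- (q * z))) \<longlongrightarrow> 1) at_bot"
    by (simp add: powr_def exp_minus divide_inverse mult.commute)
qed

context dual_problem
begin

abbreviation vol :: "real \<Rightarrow> real" where
  "vol \<tau> \<equiv> \<theta> * sqrt \<tau>"

abbreviation log_position :: "real \<Rightarrow> real \<Rightarrow> real" where
  "log_position \<tau> y \<equiv> ln y - (r + \<theta>\<^sup>2 / 2) * \<tau>"

abbreviation kernel_transform :: "(real \<Rightarrow> real \<Rightarrow> real) \<Rightarrow> real \<Rightarrow> real \<Rightarrow> real" where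
  "kernel_transform P \<tau> y \<equiv> gauss_transform (\<lambda>z. U (exp z)) (vol \<tau>) (P (vol \<tau>)) (log_position \<tau> y)"

lemma dual_v_eq_kernel_transform:
  "\<tau> > 0 \<Longrightarrow> y > 0 \<Longrightarrow> dual_v r \<theta> U \<tau> y = kernel_transform (\<lambda>_ _. 1) \<tau> y"
  by (rule dual_v_eq_gauss_transform[OF U_continuous])

lemma has_real_derivative_dual_v:
  assumes "\<tau> > 0" "y > 0"
  shows "(dual_v r \<theta> U \<tau> has_real_derivative kernel_transform slope_kernel \<tau> y / y) (at y)"
proof -
  have "((\<lambda>y. kernel_transform (\<lambda>_ _. 1) \<tau> y) has_real_derivative kernel_transform slope_kernel \<tau> y / y) (at y)"
    using gauss_transform_ln_has_real_derivative[where Q = "\<lambda>_. 1" and Q' = "\<lambda>_. 0" and R = uminus and B = 1]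
      abs_le_exp_abs \<theta>_pos assms
    by (simp add: slope_kernel_def[abs_def])
  then show ?thesis
    by (rule has_field_derivative_transform_within_open[where S = "{0<..}"])
      (use assms dual_v_eq_kernel_transform in auto)
qed

lemma deriv_dual_v: "\<tau> > 0 \<Longrightarrow> y > 0 \<Longrightarrow> deriv (dual_v r \<theta> U \<tau>) y = kernel_transform slope_kernel \<tau> y / y"
  by (rule DERIV_imp_deriv[OF has_real_derivative_dual_v])

lemma has_real_derivative_deriv_dual_v:
  assumes "\<tau> > 0" "y > 0"
  shows "(deriv (dual_v r \<theta> U \<tau>) has_real_derivative kernel_transform curvature_kernel \<tau> y / y\<^sup>2) (at y)"
proof -
  define s where "s = vol \<tau>"
  have "s > 0" using assms \<theta>_pos by (simp add: s_def)
  have slope_le: "\<bar>slope_kernel s u\<bar> \<le> 4 / s * exp \<bar>u\<bar>" for u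
    using slope_kernel_bound[OF \<open>s > 0\<close> order_refl, of u] \<open>s > 0\<close>
    by (simp add: divide_le_cancel order_trans[OF _ mult_right_mono])
  have R_le: "\<bar>(u\<^sup>2 - 1) / s\<bar> \<le> 4 / s * exp \<bar>u\<bar>" for u
    using abs_power2_minus_one_le_exp_abs[of u] \<open>s > 0\<close> by (simp add: abs_divide divide_right_mono)
  have slope_deriv: "(slope_kernel s has_real_derivative - 1 / s) (at u)" for u
    unfolding slope_kernel_def[abs_def] using \<open>s > 0\<close> by (auto intro!: derivative_eq_intros)
  have R_eq: "(u\<^sup>2 - 1) / s = - 1 / s - u * slope_kernel s u" for u
    using \<open>s > 0\<close> by (simp add: slope_kernel_def power2_eq_square field_simps)
  have "((\<lambda>y. kernel_transform slope_kernel \<tau> y) has_real_derivative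
      gauss_transform (\<lambda>z. U (exp z)) s (\<lambda>u. (u\<^sup>2 - 1) / s / s) (log_position \<tau> y) / y) (at y)"
    unfolding s_def[symmetric]
    by (rule gauss_transform_ln_has_real_derivative[OF \<open>s > 0\<close> \<open>y > 0\<close> _ _ slope_deriv R_eq slope_le R_le])
      measurable
  then have "((\<lambda>y. kernel_transform slope_kernel \<tau> y / y) has_real_derivative
      (gauss_transform (\<lambda>z. U (exp z)) s (\<lambda>u. (u\<^sup>2 - 1) / s / s) (log_position \<tau> y)
        - kernel_transform slope_kernel \<tau> y) / y\<^sup>2) (at y)"
    using \<open>y > 0\<close> by (auto intro!: derivative_eq_intros simp: field_simps power2_eq_square)
  also have "gauss_transform (\<lambda>z. U (exp z)) s (\<lambda>u. (u\<^sup>2 - 1) / s / s) (log_position \<tau> y)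
      - kernel_transform slope_kernel \<tau> y = kernel_transform curvature_kernel \<tau> y"
  proof -
    have "\<bar>(u\<^sup>2 - 1) / s / s\<bar> \<le> (4 / s\<^sup>2 + 1 / s) * exp (1 * \<bar>u\<bar>)" for u
      using abs_power2_minus_one_le_exp_abs[of u] \<open>s > 0\<close>
      by (simp add: abs_divide divide_right_mono distrib_right power2_eq_square add_increasing2)
    moreover have "\<bar>slope_kernel s u\<bar> \<le> (4 / s\<^sup>2 + 1 / s) * exp (1 * \<bar>u\<bar>)" for u
      using slope_kernel_bound[OF \<open>s > 0\<close> order_refl, of u] \<open>s > 0\<close>
      by (simp add: distrib_right add_increasing)
    moreover have "(\<lambda>u. (u\<^sup>2 - 1) / s / s - slope_kernel s u) = curvature_kernel s"
      by (simp add: fun_eq_iff slope_kernel_def curvature_kernel_def power2_eq_square)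
    ultimately show ?thesis
      unfolding s_def[symmetric] using \<open>s > 0\<close>
      by (subst gauss_transform_diff[where B = "4 / s\<^sup>2 + 1 / s" and K = 1]) auto
  qed
  finally show ?thesis
    by (rule has_field_derivative_transform_within_open[where S = "{0<..}"])
      (use assms deriv_dual_v in auto)
qed

lemma deriv_deriv_dual_v:
  "\<tau> > 0 \<Longrightarrow> y > 0 \<Longrightarrow> deriv (deriv (dual_v r \<theta> U \<tau>)) y = kernel_transform curvature_kernel \<tau> y / y\<^sup>2"
  by (rule DERIV_imp_deriv[OF has_real_derivative_deriv_dual_v])

lemma vol_Icc:
  assumes "0 < \<tau>0" and "\<tau> \<in> {\<tau>0..\<tau>1}"
  shows "0 < vol \<tau>" and "vol \<tau>0 \<le> vol \<tau>"
  using assms \<theta>_pos by auto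

lemma uniform_limit_kernel_transform_at_top:
  assumes "0 < \<tau>0" and [measurable]: "\<And>s. P s \<in> borel_measurable borel"
    and P: "\<And>s t. vol \<tau>0 \<le> s \<Longrightarrow> \<bar>P s t\<bar> \<le> B * exp \<bar>t\<bar>"
  shows "uniform_limit {\<tau>0..\<tau>1} (\<lambda>y \<tau>. kernel_transform P \<tau> y) (\<lambda>\<tau>. 0) at_top"
proof (rule uniform_limit_gauss_transform_at_top[where \<sigma> = vol and \<mu> = "\<lambda>\<tau>. (r + \<theta>\<^sup>2 / 2) * \<tau>"])
  show "\<bar>P s t\<bar> \<le> B * exp \<bar>t\<bar>" if "s \<in> vol ` {\<tau>0..\<tau>1}" for s t
    using that P vol_Icc(2)[OF \<open>0 < \<tau>0\<close>] by blast
  show "continuous_on {\<tau>0..\<tau>1} vol" "continuous_on {\<tau>0..\<tau>1} (\<lambda>\<tau>. (r + \<theta>\<^sup>2 / 2) * \<tau>)"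
    by (intro continuous_intros)+
  show "0 \<le> vol \<tau>" if "\<tau> \<in> {\<tau>0..\<tau>1}" for \<tau>
    using vol_Icc(1)[OF \<open>0 < \<tau>0\<close> that] by simp
qed simp_all

lemma uniform_limit_kernel_transform_at_right_0:
  assumes "0 < \<tau>0" and [measurable]: "\<And>s. P s \<in> borel_measurable borel"
    and P: "\<And>s t. vol \<tau>0 \<le> s \<Longrightarrow> \<bar>P s t\<bar> \<le> B * exp \<bar>t\<bar>"
    and P_cont: "\<And>s t. s \<noteq> 0 \<Longrightarrow> isCont (\<lambda>s. P s t) s"
    and P_mean: "\<And>s. s \<noteq> 0 \<Longrightarrow> (\<integral>t. normal_density (- (q * s)) 1 t * P s t \<partial>lborel) = c"
  shows "uniform_limit {\<tau>0..\<tau>1} (\<lambda>y \<tau>. kernel_transform P \<tau> y / (exp (dual_lambda r \<theta> q * \<tau>) * y powr q))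
    (\<lambda>\<tau>. c) (at_right 0)"
proof (rule uniform_limit_transform_eventually)
  show "uniform_limit {\<tau>0..\<tau>1}
      (\<lambda>y \<tau>. kernel_transform P \<tau> y / exp (q * log_position \<tau> y + q\<^sup>2 * (vol \<tau>)\<^sup>2 / 2)) (\<lambda>\<tau>. c) (at_right 0)"
  proof (rule uniform_limit_gauss_transform_at_right_0[where \<sigma> = vol and \<mu> = "\<lambda>\<tau>. (r + \<theta>\<^sup>2 / 2) * \<tau>"])
    have vol_ne: "s \<noteq> 0" if "s \<in> vol ` {\<tau>0..\<tau>1}" for s
      using that by (elim imageE) (use vol_Icc(1)[OF \<open>0 < \<tau>0\<close>] in fastforce)
    show "isCont (\<lambda>s. P s t) s" if "s \<in> vol ` {\<tau>0..\<tau>1}" for s t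
      using vol_ne[OF that] by (rule P_cont)
    show "(\<integral>t. normal_density (- (q * s)) 1 t * P s t \<partial>lborel) = c" if "s \<in> vol ` {\<tau>0..\<tau>1}" for s
      using vol_ne[OF that] by (rule P_mean)
    show "\<bar>P s t\<bar> \<le> B * exp \<bar>t\<bar>" if "s \<in> vol ` {\<tau>0..\<tau>1}" for s t
      using that P vol_Icc(2)[OF \<open>0 < \<tau>0\<close>] by blast
    show "continuous_on {\<tau>0..\<tau>1} vol" "continuous_on {\<tau>0..\<tau>1} (\<lambda>\<tau>. (r + \<theta>\<^sup>2 / 2) * \<tau>)"
      by (intro continuous_intros)+
    show "0 \<le> vol \<tau>" if "\<tau> \<in> {\<tau>0..\<tau>1}" for \<tau>
      using vol_Icc(1)[OF \<open>0 < \<tau>0\<close> that] by simp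
  qed simp_all
  have "eventually (\<lambda>y. y > 0) (at_right (0::real))"
    by (simp add: eventually_at_right_less)
  then show "eventually (\<lambda>y. \<forall>\<tau>\<in>{\<tau>0..\<tau>1}.
      kernel_transform P \<tau> y / exp (q * log_position \<tau> y + q\<^sup>2 * (vol \<tau>)\<^sup>2 / 2)
      = kernel_transform P \<tau> y / (exp (dual_lambda r \<theta> q * \<tau>) * y powr q)) (at_right 0)"
    by (rule eventually_mono) (use \<open>0 < \<tau>0\<close> in \<open>simp add: exp_dual_lambda_mult_powr\<close>)
qed

lemma dual_v_uniform_limits_at_top:
  assumes "0 < \<tau>0"
  shows "uniform_limit {\<tau>0..\<tau>1} (\<lambda>y \<tau>. dual_v r \<theta> U \<tau> y) (\<lambda>\<tau>. 0) at_top"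
    and "uniform_limit {\<tau>0..\<tau>1} (\<lambda>y \<tau>. y * deriv (dual_v r \<theta> U \<tau>) y) (\<lambda>\<tau>. 0) at_top"
    and "uniform_limit {\<tau>0..\<tau>1} (\<lambda>y \<tau>. y\<^sup>2 * deriv (deriv (dual_v r \<theta> U \<tau>)) y) (\<lambda>\<tau>. 0) at_top"
proof -
  have pos: "eventually (\<lambda>y::real. \<forall>\<tau>\<in>{\<tau>0..\<tau>1}. \<tau> > 0 \<and> y > 0) at_top"
    using eventually_gt_at_top[of 0] by (rule eventually_mono) (use \<open>0 < \<tau>0\<close> in auto)
  have "vol \<tau>0 > 0" using \<open>0 < \<tau>0\<close> \<theta>_pos by simp
  note limit = uniform_limit_kernel_transform_at_top[OF \<open>0 < \<tau>0\<close>]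
  show "uniform_limit {\<tau>0..\<tau>1} (\<lambda>y \<tau>. dual_v r \<theta> U \<tau> y) (\<lambda>\<tau>. 0) at_top"
    by (rule uniform_limit_transform_eventually[OF limit[of "\<lambda>_ _. 1" 1] eventually_mono[OF pos]])
      (auto simp: dual_v_eq_kernel_transform)
  show "uniform_limit {\<tau>0..\<tau>1} (\<lambda>y \<tau>. y * deriv (dual_v r \<theta> U \<tau>) y) (\<lambda>\<tau>. 0) at_top"
    by (rule uniform_limit_transform_eventually[OF
          limit[OF borel_measurable_slope_kernel slope_kernel_bound[OF \<open>vol \<tau>0 > 0\<close>]]
          eventually_mono[OF pos]])
      (auto simp: deriv_dual_v)
  show "uniform_limit {\<tau>0..\<tau>1} (\<lambda>y \<tau>. y\<^sup>2 * deriv (deriv (dual_v r \<theta> U \<tau>)) y) (\<lambda>\<tau>. 0) at_top"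
    by (rule uniform_limit_transform_eventually[OF
          limit[OF borel_measurable_curvature_kernel curvature_kernel_bound[OF \<open>vol \<tau>0 > 0\<close>]]
          eventually_mono[OF pos]])
      (auto simp: deriv_deriv_dual_v)
qed

lemma dual_v_uniform_limits_at_right_0:
  assumes "0 < \<tau>0"
  defines "E \<equiv> \<lambda>\<tau>. exp (dual_lambda r \<theta> q * \<tau>)"
  shows "uniform_limit {\<tau>0..\<tau>1} (\<lambda>y \<tau>. dual_v r \<theta> U \<tau> y / (E \<tau> * y powr q)) (\<lambda>\<tau>. 1) (at_right 0)"
    and "uniform_limit {\<tau>0..\<tau>1} (\<lambda>y \<tau>. deriv (dual_v r \<theta> U \<tau>) y / (E \<tau> * y powr (q - 1)))
      (\<lambda>\<tau>. q) (at_right 0)"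
    and "uniform_limit {\<tau>0..\<tau>1} (\<lambda>y \<tau>. deriv (deriv (dual_v r \<theta> U \<tau>)) y / (E \<tau> * y powr (q - 2)))
      (\<lambda>\<tau>. q * (q - 1)) (at_right 0)"
proof -
  have "eventually (\<lambda>y. y > 0) (at_right (0::real))"
    by (simp add: eventually_at_right_less)
  then have pos: "eventually (\<lambda>y::real. \<forall>\<tau>\<in>{\<tau>0..\<tau>1}. \<tau> > 0 \<and> y > 0) (at_right 0)"
    by (rule eventually_mono) (use \<open>0 < \<tau>0\<close> in auto)
  have "vol \<tau>0 > 0" using \<open>0 < \<tau>0\<close> \<theta>_pos by simp
  note limit = uniform_limit_kernel_transform_at_right_0[OF \<open>0 < \<tau>0\<close>]
  show "uniform_limit {\<tau>0..\<tau>1} (\<lambda>y \<tau>. dual_v r \<theta> U \<tau> y / (E \<tau> * y powr q)) (\<lambda>\<tau>. 1) (at_right 0)"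
    by (rule uniform_limit_transform_eventually[OF limit[of "\<lambda>_ _. 1" 1 1] eventually_mono[OF pos]])
      (auto simp: E_def dual_v_eq_kernel_transform)
  show "uniform_limit {\<tau>0..\<tau>1} (\<lambda>y \<tau>. deriv (dual_v r \<theta> U \<tau>) y / (E \<tau> * y powr (q - 1)))
      (\<lambda>\<tau>. q) (at_right 0)"
    by (rule uniform_limit_transform_eventually[OF
          limit[OF borel_measurable_slope_kernel slope_kernel_bound[OF \<open>vol \<tau>0 > 0\<close>]
            isCont_slope_kernel normal_mean_slope_kernel]
          eventually_mono[OF pos]])
      (auto simp: E_def deriv_dual_v powr_diff field_simps)
  show "uniform_limit {\<tau>0..\<tau>1} (\<lambda>y \<tau>. deriv (deriv (dual_v r \<theta> U \<tau>)) y / (E \<tau> * y powr (q - 2)))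
      (\<lambda>\<tau>. q * (q - 1)) (at_right 0)"
    by (rule uniform_limit_transform_eventually[OF
          limit[OF borel_measurable_curvature_kernel curvature_kernel_bound[OF \<open>vol \<tau>0 > 0\<close>]
            isCont_curvature_kernel normal_mean_curvature_kernel]
          eventually_mono[OF pos]])
      (auto simp: E_def deriv_deriv_dual_v powr_diff field_simps)
qed
end

theorem corollary4p2:
  fixes r \<theta> q :: real and U :: "real \<Rightarrow> real"
  assumes "r > 0" and "\<theta> > 0" and "q < 0"
    and "continuous_on {0<..} U"
    and "(U \<longlongrightarrow> 0) at_top"
    and "((\<lambda>y. U y / y powr q) \<longlongrightarrow> 1) (at_right 0)"
  defines "v \<equiv> dual_v r \<theta> U"
    and "lam \<equiv> dual_lambda r \<theta> q"
  shows "(\<forall>\<tau>>0. \<forall>y>0. (\<lambda>y. v \<tau> y) differentiable (at y)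
                      \<and> deriv (\<lambda>y. v \<tau> y) differentiable (at y))
    \<and> (\<forall>\<tau>0 \<tau>1. 0 < \<tau>0 \<and> \<tau>0 < \<tau>1 \<longrightarrow>
        uniform_limit {\<tau>0..\<tau>1} (\<lambda>y \<tau>. v \<tau> y) (\<lambda>\<tau>. 0) at_top
      \<and> uniform_limit {\<tau>0..\<tau>1} (\<lambda>y \<tau>. y * deriv (\<lambda>y. v \<tau> y) y) (\<lambda>\<tau>. 0) at_top
      \<and> uniform_limit {\<tau>0..\<tau>1} (\<lambda>y \<tau>. y\<^sup>2 * deriv (deriv (\<lambda>y. v \<tau> y)) y) (\<lambda>\<tau>. 0) at_top
      \<and> uniform_limit {\<tau>0..\<tau>1} (\<lambda>y \<tau>. v \<tau> y / (exp (lam * \<tau>) * y powr q))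
          (\<lambda>\<tau>. 1) (at_right 0)
      \<and> uniform_limit {\<tau>0..\<tau>1} (\<lambda>y \<tau>. deriv (\<lambda>y. v \<tau> y) y / (exp (lam * \<tau>) * y powr (q - 1)))
          (\<lambda>\<tau>. q) (at_right 0)
      \<and> uniform_limit {\<tau>0..\<tau>1} (\<lambda>y \<tau>. deriv (deriv (\<lambda>y. v \<tau> y)) y / (exp (lam * \<tau>) * y powr (q - 2)))
          (\<lambda>\<tau>. q * (q - 1)) (at_right 0))"
proof -
  interpret dual_problem r \<theta> q U
    using assms(2-6) by unfold_locales
  have "\<forall>\<tau>>0. \<forall>y>0. v \<tau> differentiable (at y) \<and> deriv (v \<tau>) differentiable (at y)"
    unfolding v_def real_differentiable_def
    using has_real_derivative_dual_v has_real_derivative_deriv_dual_v by blast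
  moreover have "uniform_limit {\<tau>0..\<tau>1} (\<lambda>y \<tau>. v \<tau> y) (\<lambda>\<tau>. 0) at_top
      \<and> uniform_limit {\<tau>0..\<tau>1} (\<lambda>y \<tau>. y * deriv (v \<tau>) y) (\<lambda>\<tau>. 0) at_top
      \<and> uniform_limit {\<tau>0..\<tau>1} (\<lambda>y \<tau>. y\<^sup>2 * deriv (deriv (v \<tau>)) y) (\<lambda>\<tau>. 0) at_top
      \<and> uniform_limit {\<tau>0..\<tau>1} (\<lambda>y \<tau>. v \<tau> y / (exp (lam * \<tau>) * y powr q)) (\<lambda>\<tau>. 1) (at_right 0)
      \<and> uniform_limit {\<tau>0..\<tau>1} (\<lambda>y \<tau>. deriv (v \<tau>) y / (exp (lam * \<tau>) * y powr (q - 1)))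
          (\<lambda>\<tau>. q) (at_right 0)
      \<and> uniform_limit {\<tau>0..\<tau>1} (\<lambda>y \<tau>. deriv (deriv (v \<tau>)) y / (exp (lam * \<tau>) * y powr (q - 2)))
          (\<lambda>\<tau>. q * (q - 1)) (at_right 0)"
    if "0 < \<tau>0" for \<tau>0 \<tau>1
    unfolding v_def lam_def
    using dual_v_uniform_limits_at_top[OF that] dual_v_uniform_limits_at_right_0[OF that] by blast
  ultimately show ?thesis by blast
qed

end
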